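(* For every $\gamma\in(0,1)$, $$\sum_{n=0}^{\infty}2^n\gamma^{2^n}\le\frac{1}{\ln\frac{1}{\gamma}}\left(\frac{1}{e}+\frac{\gamma}{\ln 2}\right).$$ *)

theory Defs
  imports "HOL-Analysis.Analysis"
begin

end

theory Submission
  imports Defs
begin

(*
  Put t = ln (1/gamma), so that the n-th term is phi (2^n) with phi u = u * exp (- t * u).
  The function phi increases up to its maximum 1/(e t) at u = 1/t and decreases afterwards.
  Hence all terms but one at the peak are bounded by the integrals of y \<mapsto> phi (2^y) over
  pairwise disjoint unit intervals in [0, \<infinity>), and the integral over [0, \<infinity>) is
  exp (- t) / (t ln 2) = gamma / (t ln 2); the remaining term is at most 1/(e t).
*)

lemma suminf_unimodal_le:
  fixes h F :: "nat \<Rightarrow> real"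
  assumes nonneg: "\<And>n. 0 \<le> h n" and bounded: "\<And>n. h n \<le> M"
    and rising: "\<And>n. n < k \<Longrightarrow> h n \<le> h (Suc n)"
    and falling: "\<And>n. k < n \<Longrightarrow> h (Suc n) \<le> h n"
    and min_le_diff: "\<And>n. min (h n) (h (Suc n)) \<le> F (Suc n) - F n"
    and upper: "\<And>n. F n \<le> L"
  shows "suminf h \<le> M + (L - F 0)"
proof -
  have partial: "(\<Sum>n < k + 2 + m. h n) \<le> M + (F (k + 1 + m) - F 0)" for m
  proof (induction m)
    case 0
    have "(\<Sum>n<k. h n) \<le> (\<Sum>n<k. F (Suc n) - F n)"
      using rising min_le_diff by (intro sum_mono) (metis lessThan_iff min.absorb1)
    also have "\<dots> = F k - F 0"
      by (rule sum_lessThan_telescope)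
    finally have "(\<Sum>n<k. h n) \<le> F k - F 0" .
    moreover have "h k + h (Suc k) \<le> M + (F (Suc k) - F k)"
      using min_le_diff[of k] bounded[of k] bounded[of "Suc k"]
      by (simp add: min_def split: if_splits)
    ultimately show ?case
      by simp
  next
    case (Suc m)
    have "h (k + 2 + m) \<le> F (k + 2 + m) - F (k + 1 + m)"
      using min_le_diff[of "k + 1 + m"] falling[of "k + 1 + m"] by (simp add: min_absorb2)
    with Suc.IH show ?case
      by simp
  qed
  have "(\<Sum>n<N. h n) \<le> M + (L - F 0)" for N
  proof -
    have "(\<Sum>n<N. h n) \<le> (\<Sum>n < k + 2 + N. h n)"
      using nonneg by (intro sum_mono2) auto
    also have "\<dots> \<le> M + (L - F 0)"
      using partial[of N] upper[of "k + 1 + N"] by simp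
    finally show ?thesis .
  qed
  then show ?thesis
    by (intro suminf_le_const summableI_nonneg_bounded[OF nonneg])
qed

lemma has_real_derivative_mult_exp_neg:
  fixes t x :: real
  shows "((\<lambda>u. u * exp (- t * u)) has_real_derivative exp (- t * x) * (1 - t * x)) (at x)"
  by (auto intro!: derivative_eq_intros simp: algebra_simps)

lemma mult_exp_neg_le:
  fixes t u :: real
  assumes "0 < t"
  shows "u * exp (- t * u) \<le> 1 / (exp 1 * t)"
proof -
  have "t * u \<le> exp (t * u - 1)"
    using exp_ge_add_one_self[of "t * u - 1"] by simp
  then have "exp 1 * t * u \<le> exp (t * u)"
    by (simp add: exp_diff field_simps)
  then show ?thesis
    using assms by (simp add: exp_minus field_simps)
qed

lemma mult_exp_neg_mono:
  fixes t u v :: real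
  assumes "0 < t" "u \<le> v" "v \<le> 1 / t"
  shows "u * exp (- t * u) \<le> v * exp (- t * v)"
proof (rule deriv_nonneg_imp_mono[OF has_real_derivative_mult_exp_neg _ \<open>u \<le> v\<close>])
  fix x assume "x \<in> {u..v}"
  then have "t * x \<le> t * v"
    using assms by (intro mult_left_mono) auto
  also have "\<dots> \<le> 1"
    using assms by (simp add: field_simps)
  finally have "t * x \<le> 1" .
  then show "0 \<le> exp (- t * x) * (1 - t * x)" by simp
qed

lemma mult_exp_neg_antimono:
  fixes t u v :: real
  assumes "0 < t" "1 / t \<le> u" "u \<le> v"
  shows "v * exp (- t * v) \<le> u * exp (- t * u)"
proof -
  have "1 \<le> t * x" if "x \<in> {u..v}" for x
  proof -
    have "1 \<le> t * u"
      using assms by (simp add: field_simps)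
    also have "\<dots> \<le> t * x"
      using assms that by (intro mult_left_mono) auto
    finally show ?thesis .
  qed
  then have "exp (- t * x) * (1 - t * x) \<le> 0" if "x \<in> {u..v}" for x
    using that by (simp add: mult_nonneg_nonpos)
  then show ?thesis
    using has_real_derivative_mult_exp_neg
    by (intro DERIV_nonpos_imp_nonincreasing[OF \<open>u \<le> v\<close>]) auto
qed

lemma min_le_mult_exp_neg:
  fixes t a u b :: real
  assumes "0 < t" "a \<le> u" "u \<le> b"
  shows "min (a * exp (- t * a)) (b * exp (- t * b)) \<le> u * exp (- t * u)"
proof (cases "u \<le> 1 / t")
  case True
  then show ?thesis
    using mult_exp_neg_mono[OF \<open>0 < t\<close> \<open>a \<le> u\<close>] by simp
next
  case False
  then show ?thesis
    using mult_exp_neg_antimono[OF \<open>0 < t\<close> _ \<open>u \<le> b\<close>] by simp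
qed

lemma min_mult_exp_neg_power_le_diff:
  fixes t b :: real
  assumes "0 < t" "1 < b"
  shows "min (b ^ n * exp (- t * b ^ n)) (b ^ Suc n * exp (- t * b ^ Suc n))
    \<le> (exp (- t * b ^ n) - exp (- t * b ^ Suc n)) / (t * ln b)"
proof -
  \<comment> \<open>The right-hand side is the integral of g over [n, n + 1], with antiderivative G.\<close>
  define G where "G y = - exp (- t * b powr y) / (t * ln b)" for y
  define g where "g y = b powr y * exp (- t * b powr y)" for y
  have "(G has_real_derivative g y) (at y)" for y
    unfolding G_def g_def using assms
    by (auto intro!: derivative_eq_intros simp: field_simps)
  then obtain z where z: "real n < z" "z < real (Suc n)"
    and G_diff: "G (Suc n) - G n = b powr z * exp (- t * b powr z)"
    using MVT2[of "real n" "real (Suc n)" G g] by (auto simp: g_def)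
  have "b powr real n \<le> b powr z" "b powr z \<le> b powr real (Suc n)"
    using assms z by (auto intro!: powr_mono simp del: of_nat_Suc)
  then have "b ^ n \<le> b powr z" "b powr z \<le> b ^ Suc n"
    using assms by (simp_all only: powr_realpow)
  then have "min (b ^ n * exp (- t * b ^ n)) (b ^ Suc n * exp (- t * b ^ Suc n))
      \<le> G (Suc n) - G n"
    unfolding G_diff by (rule min_le_mult_exp_neg[OF \<open>0 < t\<close>])
  also have "\<dots> = (exp (- t * b ^ n) - exp (- t * b ^ Suc n)) / (t * ln b)"
    using assms unfolding G_def by (simp add: powr_realpow diff_divide_distrib del: of_nat_Suc)
  finally show ?thesis .
qed

lemma mult_exp_neg_power_unimodal:
  fixes t b :: real
  assumes "0 < t" "1 < b"
  obtains k
  where "\<And>n. n < k \<Longrightarrow> b ^ n * exp (- t * b ^ n) \<le> b ^ Suc n * exp (- t * b ^ Suc n)"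
    and "\<And>n. k < n \<Longrightarrow> b ^ Suc n * exp (- t * b ^ Suc n) \<le> b ^ n * exp (- t * b ^ n)"
proof
  define k where "k = (LEAST k. 1 / t < b ^ Suc k)"
  obtain m where "1 / t < b ^ m"
    using real_arch_pow[OF \<open>1 < b\<close>] by blast
  also have "\<dots> \<le> b ^ Suc m"
    using assms by (intro power_increasing) auto
  finally have above: "1 / t < b ^ Suc k"
    unfolding k_def by (rule LeastI)
  fix n
  show "b ^ n * exp (- t * b ^ n) \<le> b ^ Suc n * exp (- t * b ^ Suc n)" if "n < k"
  proof (rule mult_exp_neg_mono[OF \<open>0 < t\<close>])
    show "b ^ n \<le> b ^ Suc n"
      using assms by simp
    show "b ^ Suc n \<le> 1 / t"
      using not_less_Least[OF that[unfolded k_def]] by simp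
  qed
  show "b ^ Suc n * exp (- t * b ^ Suc n) \<le> b ^ n * exp (- t * b ^ n)" if "k < n"
  proof (rule mult_exp_neg_antimono[OF \<open>0 < t\<close>])
    have "b ^ Suc k \<le> b ^ n"
      using assms that by (intro power_increasing) auto
    then show "1 / t \<le> b ^ n"
      using above by simp
    show "b ^ n \<le> b ^ Suc n"
      using assms by simp
  qed
qed

theorem lemma4:
  fixes \<gamma> :: real
  assumes "0 < \<gamma>" and "\<gamma> < 1"
  shows "(\<Sum>n. 2 ^ n * \<gamma> ^ (2 ^ n)) \<le> (1 / ln (1 / \<gamma>)) * (1 / exp 1 + \<gamma> / ln 2)"
proof -
  define t where "t = ln (1 / \<gamma>)"
  have "0 < t"
    unfolding t_def using assms by simp
  have \<gamma>_eq: "\<gamma> = exp (- t)"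
    unfolding t_def using assms by (simp add: ln_div)
  define h where "h n = 2 ^ n * exp (- t * 2 ^ n)" for n :: nat
  define F where "F n = - exp (- t * 2 ^ n) / (t * ln 2)" for n :: nat
  have terms: "2 ^ n * \<gamma> ^ (2 ^ n) = h n" for n
    unfolding \<gamma>_eq h_def by (simp add: exp_of_nat_mult[symmetric] mult.commute)
  obtain k where rising: "\<And>n. n < k \<Longrightarrow> h n \<le> h (Suc n)"
    and falling: "\<And>n. k < n \<Longrightarrow> h (Suc n) \<le> h n"
    using mult_exp_neg_power_unimodal[OF \<open>0 < t\<close>, of 2] unfolding h_def by auto
  have min_le_diff: "min (h n) (h (Suc n)) \<le> F (Suc n) - F n" for n
    using min_mult_exp_neg_power_le_diff[OF \<open>0 < t\<close>, of 2 n]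
    unfolding h_def F_def by (simp add: diff_divide_distrib)
  have "suminf h \<le> 1 / (exp 1 * t) + (0 - F 0)"
  proof (rule suminf_unimodal_le[where h = h and F = F, OF _ _ rising falling min_le_diff])
    show "0 \<le> h n" "h n \<le> 1 / (exp 1 * t)" "F n \<le> 0" for n
      unfolding h_def F_def using mult_exp_neg_le[OF \<open>0 < t\<close>] \<open>0 < t\<close> by simp_all
  qed
  also have "\<dots> = (1 / t) * (1 / exp 1 + \<gamma> / ln 2)"
    unfolding F_def \<gamma>_eq using \<open>0 < t\<close> by (simp add: field_simps)
  finally show ?thesis
    unfolding terms t_def .
qed

end
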